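(* Let $G$ be a group acting on the binary tree. If $G$ contains a weakly branch group, then $G$ is weakly branch. If $G$ contains a subgroup $H$ such that, for every $n\in\mathbb N$, $(\mho_2)^n(H)$ acts transitively on every subtree at level $n$, then $G$ is saturated.
   Context: The binary tree is $\mathcal T=X^*$, $X=\{0,1\}$, with isometry group $W$; $G\le W$. For $v\in X^*$, $g\in W$: $v*g$ acts as $g$ on the subtree $v\mathcal T$ and fixes other vertices; $g@v$ is the state, $(vw)^g=v^gw^{g@v}$. $G$ is level-transitive if transitive on each $X^n$; weakly branch if level-transitive and $(v*G)\cap G\ne1$ for all $v\in X^*$; saturated if for every $n$ it contains a characteristic subgroup $H_n$ fixing $X^n$ with $\{h@v:h\in H_n\}$ level-transitive for all $v\in X^n$. $\mho_2(H)$ is the subgroup generated by squares of elements of $H$, and $(\mho_2)^n$ its $n$-fold iterate. "Acts transitively on every subtree at level $n$" means that for each $v\in X^n$ the group fixes $v$ and its restriction to $v\mathcal T$ is level-transitive. *)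

theory Defs
  imports "HOL-Algebra.Algebra" "HOL-Library.Sublist"
begin

text \<open>Binary tree X^* with X = {0,1} modelled as bool lists.
  Isometries (tree automorphisms) are bijections preserving length and prefixes.\<close>

definition is_aut :: "(bool list \<Rightarrow> bool list) \<Rightarrow> bool" where
  "is_aut g \<longleftrightarrow> bij g \<and> (\<forall>v. length (g v) = length v)
      \<and> (\<forall>v w. prefix v w \<longrightarrow> prefix (g v) (g w))"

text \<open>The group W; right action convention v^(gh) = (v^g)^h, so g*h = h o g.\<close>
definition W_grp :: "(bool list \<Rightarrow> bool list) monoid" where
  "W_grp = \<lparr>carrier = {g. is_aut g}, monoid.mult = (\<lambda>g h. h \<circ> g), one = id\<rparr>"

text \<open>State g@v: (vw)^g = v^g w^(g@v).\<close>
definition state :: "(bool list \<Rightarrow> bool list) \<Rightarrow> bool list \<Rightarrow> (bool list \<Rightarrow> bool list)" where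
  "state g v = (\<lambda>w. drop (length v) (g (v @ w)))"

definition rist :: "bool list \<Rightarrow> (bool list \<Rightarrow> bool list) \<Rightarrow> (bool list \<Rightarrow> bool list)" where
  "rist v g = (\<lambda>u. if prefix v u then v @ g (drop (length v) u) else u)"

definition level_transitive :: "(bool list \<Rightarrow> bool list) set \<Rightarrow> bool" where
  "level_transitive S \<longleftrightarrow>
     (\<forall>n u w. length u = n \<longrightarrow> length w = n \<longrightarrow> (\<exists>g\<in>S. g u = w))"

definition weakly_branch :: "(bool list \<Rightarrow> bool list) set \<Rightarrow> bool" where
  "weakly_branch G \<longleftrightarrow> level_transitive G \<and>
     (\<forall>v. \<exists>h. h \<in> rist v ` G \<and> h \<in> G \<and> h \<noteq> id)"

definition characteristic :: "(bool list \<Rightarrow> bool list) set \<Rightarrow> (bool list \<Rightarrow> bool list) set \<Rightarrow> bool" where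
  "characteristic H G \<longleftrightarrow> subgroup H (W_grp\<lparr>carrier := G\<rparr>) \<and>
     (\<forall>\<phi> \<in> iso (W_grp\<lparr>carrier := G\<rparr>) (W_grp\<lparr>carrier := G\<rparr>). \<phi> ` H = H)"

definition fixes_level :: "nat \<Rightarrow> (bool list \<Rightarrow> bool list) set \<Rightarrow> bool" where
  "fixes_level n H \<longleftrightarrow> (\<forall>h\<in>H. \<forall>v. length v = n \<longrightarrow> h v = v)"

definition saturated :: "(bool list \<Rightarrow> bool list) set \<Rightarrow> bool" where
  "saturated G \<longleftrightarrow> (\<forall>n. \<exists>H. characteristic H G \<and> fixes_level n H \<and>
      (\<forall>v. length v = n \<longrightarrow> level_transitive ((\<lambda>h. state h v) ` H)))"

definition mho2 :: "(bool list \<Rightarrow> bool list) set \<Rightarrow> (bool list \<Rightarrow> bool list) set" where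
  "mho2 H = generate W_grp {h \<otimes>\<^bsub>W_grp\<^esub> h | h. h \<in> H}"

definition acts_trans_subtrees :: "nat \<Rightarrow> (bool list \<Rightarrow> bool list) set \<Rightarrow> bool" where
  "acts_trans_subtrees n K \<longleftrightarrow> (\<forall>v. length v = n \<longrightarrow>
      (\<forall>h\<in>K. h v = v) \<and> level_transitive ((\<lambda>h. state h v) ` K))"

end

theory Submission
  imports Defs
begin

text \<open>Being weakly branch only asks for certain elements to exist in the group, so it passes to
  overgroups. For saturation take \<open>H\<^sub>n = (mho2 ^^ n) G\<close>. As a verbal subgroup it is
  characteristic in \<open>G\<close>. It fixes level \<open>n\<close>: an automorphism fixing a vertex permutes its two
  children, so squares of elements fixing level \<open>n\<close> fix level \<open>n + 1\<close>. And it contains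
  \<open>(mho2 ^^ n) H\<close>, whose states at level \<open>n\<close> are already level-transitive.\<close>

lemma prefix_same_length_eq:
  assumes "prefix xs zs" "prefix ys zs" "length xs = length ys"
  shows "xs = ys"
  using assms by (metis prefix_length_prefix prefix_order.antisym order_refl)

lemma is_aut_id: "is_aut id"
  unfolding is_aut_def by simp

lemma is_aut_comp:
  assumes "is_aut g" "is_aut h"
  shows "is_aut (h \<circ> g)"
  using assms unfolding is_aut_def by (simp add: bij_comp)

lemma is_aut_inv_into:
  assumes "is_aut g"
  shows "is_aut (inv_into UNIV g)"
proof -
  let ?g' = "inv_into UNIV g"
  have bij: "bij g" and len: "\<And>v. length (g v) = length v"
    and pre: "\<And>v w. prefix v w \<Longrightarrow> prefix (g v) (g w)"
    using assms unfolding is_aut_def by auto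
  have g_g': "g (?g' x) = x" for x
    using bij by (simp add: bij_is_surj surj_f_inv_f)
  have len': "length (?g' v) = length v" for v
    using len[of "?g' v"] by (simp add: g_g')
  have "prefix (?g' v) (?g' w)" if "prefix v w" for v w
  proof -
    define u where "u = take (length v) (?g' w)"
    have "prefix (g u) w"
      using pre[of u "?g' w"] by (simp add: u_def take_is_prefix g_g')
    moreover have "length (g u) = length v"
      using prefix_length_le[OF that] by (simp add: u_def len len')
    ultimately have "g u = v"
      using that prefix_same_length_eq by blast
    then have "u = ?g' v"
      using bij by (metis bij_is_inj inv_f_f)
    then show ?thesis
      unfolding u_def by (metis take_is_prefix)
  qed
  then show ?thesis
    unfolding is_aut_def using bij bij_imp_bij_inv len' by blast
qed

lemma W_grp_carrier [simp]: "g \<in> carrier W_grp \<longleftrightarrow> is_aut g"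
  by (simp add: W_grp_def)

lemma W_grp_mult [simp]: "g \<otimes>\<^bsub>W_grp\<^esub> h = h \<circ> g"
  by (simp add: W_grp_def)

lemma W_grp_one [simp]: "\<one>\<^bsub>W_grp\<^esub> = id"
  by (simp add: W_grp_def)

lemma comp_inv_into_eq_id: "is_aut g \<Longrightarrow> g \<circ> inv_into UNIV g = id"
  unfolding is_aut_def bij_def by (simp add: surj_iff)

lemma group_W_grp: "group W_grp"
proof (rule groupI)
  show "\<exists>y\<in>carrier W_grp. y \<otimes>\<^bsub>W_grp\<^esub> g = \<one>\<^bsub>W_grp\<^esub>" if "g \<in> carrier W_grp" for g
    using that is_aut_inv_into comp_inv_into_eq_id by force
qed (auto simp: is_aut_comp is_aut_id comp_assoc)

lemma W_grp_inv:
  assumes "is_aut g"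
  shows "inv\<^bsub>W_grp\<^esub> g = inv_into UNIV g"
  using assms by (intro group.inv_equality[OF group_W_grp])
    (simp_all add: comp_inv_into_eq_id is_aut_inv_into)

lemma subgroup_W_grp_is_aut: "subgroup G W_grp \<Longrightarrow> g \<in> G \<Longrightarrow> is_aut g"
  using subgroup.subset by fastforce

lemma is_aut_fixes_children:
  assumes "is_aut g" "g v = v"
  shows "\<exists>c. g (v @ [b]) = v @ [c]"
proof -
  have "prefix (g v) (g (v @ [b]))" and "length (g (v @ [b])) = Suc (length v)"
    using assms(1) unfolding is_aut_def by simp_all
  then obtain zs where "g (v @ [b]) = v @ zs" "length zs = 1"
    using assms(2) by (auto simp: prefix_def)
  then show ?thesis
    by (cases zs) auto
qed

text \<open>The one place where the binary alphabet matters: \<open>g\<close> permutes the two children of \<open>v\<close>,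
  so \<open>g \<circ> g\<close> fixes them.\<close>

lemma is_aut_square_fixes_child:
  assumes "is_aut g" "g v = v"
  shows "g (g (v @ [b])) = v @ [b]"
proof -
  obtain c where c: "g (v @ [b]) = v @ [c]"
    using is_aut_fixes_children[OF assms] by blast
  obtain d where d: "g (v @ [\<not> b]) = v @ [d]"
    using is_aut_fixes_children[OF assms] by blast
  have "inj g"
    using assms(1) unfolding is_aut_def by (simp add: bij_is_inj)
  then have "g (v @ [\<not> b]) \<noteq> g (v @ [b])"
    by (auto dest: injD)
  then have "d \<noteq> c"
    using c d by auto
  show ?thesis
  proof (cases "c = b")
    case True
    then show ?thesis using c by simp
  next
    case False
    then have "d = b"
      using \<open>d \<noteq> c\<close> by auto
    then show ?thesis using c d False by auto
  qed
qed

lemma fixes_level_squares: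
  assumes "\<forall>g\<in>S. is_aut g" "fixes_level n S"
  shows "fixes_level (Suc n) {g \<otimes>\<^bsub>W_grp\<^esub> g | g. g \<in> S}"
  unfolding fixes_level_def
proof clarsimp
  fix g and u :: "bool list"
  assume "g \<in> S" "length u = Suc n"
  moreover obtain v b where "u = v @ [b]"
    using \<open>length u = Suc n\<close> by (metis length_Suc_conv_rev)
  ultimately show "g (g u) = u"
    using assms is_aut_square_fixes_child unfolding fixes_level_def by auto
qed

lemma fixes_level_generate:
  assumes "\<forall>g\<in>S. is_aut g" "fixes_level n S"
  shows "fixes_level n (generate W_grp S)"
  unfolding fixes_level_def
proof
  fix h assume "h \<in> generate W_grp S"
  then show "\<forall>v. length v = n \<longrightarrow> h v = v"
  proof (induction rule: generate.induct)
    case (inv g)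
    then have "is_aut g" "inj g" "\<forall>v. length v = n \<longrightarrow> g v = v"
      using assms unfolding fixes_level_def is_aut_def by (auto simp: bij_is_inj)
    then show ?case
      by (simp add: W_grp_inv) (metis inv_f_f)
  qed (use assms in \<open>auto simp: fixes_level_def\<close>)
qed

lemma fixes_level_0: "\<forall>g\<in>S. is_aut g \<Longrightarrow> fixes_level 0 S"
  unfolding fixes_level_def is_aut_def by (metis length_0_conv)

lemma squares_subset_subgroup:
  "subgroup H W_grp \<Longrightarrow> {g \<otimes>\<^bsub>W_grp\<^esub> g | g. g \<in> H} \<subseteq> H"
  by (auto dest: subgroup.m_closed[of H W_grp] simp del: W_grp_mult)

lemma subgroup_mho2:
  assumes "subgroup H W_grp"
  shows "subgroup (mho2 H) W_grp"
  unfolding mho2_def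
  using order_trans[OF squares_subset_subgroup[OF assms] subgroup.subset[OF assms]]
  by (rule group.generate_is_subgroup[OF group_W_grp])

lemma mho2_subset: "subgroup H W_grp \<Longrightarrow> mho2 H \<subseteq> H"
  unfolding mho2_def
  by (rule group.generate_subgroup_incl[OF group_W_grp squares_subset_subgroup])

lemma fixes_level_mho2:
  assumes "subgroup H W_grp" "fixes_level n H"
  shows "fixes_level (Suc n) (mho2 H)"
proof -
  have "\<forall>g\<in>H. is_aut g"
    using assms(1) subgroup_W_grp_is_aut by blast
  moreover have "\<forall>g\<in>{g \<otimes>\<^bsub>W_grp\<^esub> g | g. g \<in> H}. is_aut g"
    using assms(1) squares_subset_subgroup subgroup_W_grp_is_aut by blast
  ultimately show ?thesis
    unfolding mho2_def using assms(2) by (intro fixes_level_generate fixes_level_squares)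
qed

lemma mho2_mono: "A \<subseteq> B \<Longrightarrow> mho2 A \<subseteq> mho2 B"
  unfolding mho2_def by (rule group.mono_generate[OF group_W_grp]) blast

lemma mho2_power_mono: "A \<subseteq> B \<Longrightarrow> (mho2 ^^ n) A \<subseteq> (mho2 ^^ n) B"
  by (induction n) (auto dest: mho2_mono)

lemma subgroup_mho2_power: "subgroup H W_grp \<Longrightarrow> subgroup ((mho2 ^^ n) H) W_grp"
  by (induction n) (auto intro: subgroup_mho2)

lemma mho2_power_subset: "subgroup H W_grp \<Longrightarrow> (mho2 ^^ n) H \<subseteq> H"
  by (induction n) (use mho2_subset subgroup_mho2_power in fastforce)+

lemma fixes_level_mho2_power: "subgroup H W_grp \<Longrightarrow> fixes_level n ((mho2 ^^ n) H)"
  by (induction n)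
    (auto intro: fixes_level_0 fixes_level_mho2 subgroup_mho2_power subgroup_W_grp_is_aut)

lemma mho2_image:
  assumes G: "subgroup G W_grp" and G': "subgroup G' W_grp"
    and hom: "\<phi> \<in> hom (W_grp\<lparr>carrier := G\<rparr>) (W_grp\<lparr>carrier := G'\<rparr>)"
    and "S \<subseteq> G"
  shows "\<phi> ` mho2 S = mho2 (\<phi> ` S)"
proof -
  interpret group_hom "W_grp\<lparr>carrier := G\<rparr>" "W_grp\<lparr>carrier := G'\<rparr>" \<phi>
    using G G' hom by (simp add: group_hom_def group_hom_axioms_def
        subgroup.subgroup_is_group[OF _ group_W_grp])
  let ?sq = "\<lambda>T. {g \<otimes>\<^bsub>W_grp\<^esub> g | g. g \<in> T}"
  have sq_G: "?sq S \<subseteq> G"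
    using \<open>S \<subseteq> G\<close> squares_subset_subgroup[OF G] by blast
  have "\<phi> ` ?sq S = ?sq (\<phi> ` S)"
    using \<open>S \<subseteq> G\<close> hom_mult by force
  moreover have "\<phi> ` ?sq S \<subseteq> G'"
    using sq_G hom_closed by auto
  ultimately have "mho2 (\<phi> ` S) = generate (W_grp\<lparr>carrier := G'\<rparr>) (\<phi> ` ?sq S)"
    unfolding mho2_def by (simp add: group.generate_consistent[OF group_W_grp _ G'])
  also have "\<dots> = \<phi> ` generate (W_grp\<lparr>carrier := G\<rparr>) (?sq S)"
    using sq_G by (simp add: generate_img)
  also have "\<dots> = \<phi> ` mho2 S"
    unfolding mho2_def using group.generate_consistent[OF group_W_grp sq_G G] by simp
  finally show ?thesis ..
qed

lemma characteristic_mho2_power: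
  assumes G: "subgroup G W_grp"
  shows "characteristic ((mho2 ^^ n) G) G"
proof -
  have "\<phi> ` (mho2 ^^ n) G = (mho2 ^^ n) G"
    if \<phi>: "\<phi> \<in> iso (W_grp\<lparr>carrier := G\<rparr>) (W_grp\<lparr>carrier := G\<rparr>)" for \<phi>
  proof (induction n)
    case 0
    then show ?case
      using \<phi> by (simp add: iso_def bij_betw_def)
  next
    case (Suc n)
    then show ?case
      using \<phi> mho2_image[OF G G _ mho2_power_subset[OF G]] by (simp add: iso_def)
  qed
  then show ?thesis
    unfolding characteristic_def
    using group.subgroup_incl[OF group_W_grp subgroup_mho2_power[OF G] G mho2_power_subset[OF G]]
    by blast
qed

lemma level_transitive_mono: "level_transitive S \<Longrightarrow> S \<subseteq> T \<Longrightarrow> level_transitive T"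
  unfolding level_transitive_def by blast

lemma weakly_branch_mono: "weakly_branch K \<Longrightarrow> K \<subseteq> G \<Longrightarrow> weakly_branch G"
  unfolding weakly_branch_def using level_transitive_mono by blast

lemma saturated_if_mho2_power_acts_trans_subtrees:
  assumes G: "subgroup G W_grp" and "H \<subseteq> G"
    and trans: "\<forall>n. acts_trans_subtrees n ((mho2 ^^ n) H)"
  shows "saturated G"
  unfolding saturated_def
proof
  fix n
  have "level_transitive ((\<lambda>h. state h v) ` (mho2 ^^ n) G)" if "length v = n" for v
  proof (rule level_transitive_mono)
    show "level_transitive ((\<lambda>h. state h v) ` (mho2 ^^ n) H)"
      using trans that unfolding acts_trans_subtrees_def by blast
    show "(\<lambda>h. state h v) ` (mho2 ^^ n) H \<subseteq> (\<lambda>h. state h v) ` (mho2 ^^ n) G"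
      using mho2_power_mono[OF \<open>H \<subseteq> G\<close>] by (rule image_mono)
  qed
  then show "\<exists>K. characteristic K G \<and> fixes_level n K \<and>
      (\<forall>v. length v = n \<longrightarrow> level_transitive ((\<lambda>h. state h v) ` K))"
    using characteristic_mho2_power[OF G] fixes_level_mho2_power[OF G] by blast
qed

theorem lemma3p9:
  assumes "subgroup G W_grp"
  shows "((\<exists>K. subgroup K W_grp \<and> K \<subseteq> G \<and> weakly_branch K) \<longrightarrow> weakly_branch G)
       \<and> ((\<exists>H. subgroup H W_grp \<and> H \<subseteq> G \<and>
              (\<forall>n. acts_trans_subtrees n ((mho2 ^^ n) H))) \<longrightarrow> saturated G)"
  using weakly_branch_mono saturated_if_mho2_power_acts_trans_subtrees[OF assms] by blast

end
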